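(* Fix $i\in\{1,\dots,k\}$ and $\hat z\in[2^n]$, and let $m_1,m_2\in\mathcal{M}^{\text{good}}$ satisfy $z'_i(m_1)=z'_i(m_2)=\hat z$ and $b_i(m_1)\ne b_i(m_2)$. Then there exists an element of $\mathcal{B}^{\text{err}}$ that the decoder of terminal $t$ maps to $m_1$ or to $m_2$.
   Context: Setting. $\mathcal{N}$ is a directed network containing nodes $s_1,\dots,s_k,t_1,\dots,t_k$. The network $\mathcal{G}$ is obtained from $\mathcal{N}$ by adding new nodes $s,t,A_1,\dots,A_k,B_1,\dots,B_k$ and, for each $i$, the unit-capacity edges $a_i=(s,A_i)$, two parallel edges $x_i,y_i$ from $A_i$ to $B_i$, $z_i=(A_i,s_i)$, $z'_i=(t_i,B_i)$, and $b_i=(B_i,t)$; the incoming edges of $t$ are exactly $b_1,\dots,b_k$. Admissible error patterns $\boldsymbol r=(r_e)$ are those in which at most one edge $e$ has $r_e\neq0$, with $e\notin\{a_1,\dots,a_k,b_1,\dots,b_k\}$. The output of an edge is its input XOR $r_e$. Let $\mathcal{C}$ be a length-$n$ network code on $\mathcal{G}$. The source $s$ has message $m\in[2^{kn}]$, where $[N]=\{1,\dots,N\}$. An edge $e=(u,v)$ of capacity $c_e$ carries a value in $[2^{nc_e}]$ computed from the signals on the incoming edges of $u$ (and from $m$ if $u=s$). The terminal $t$ has a decoder mapping each tuple in $[2^n]^k$ received on $(b_1,\dots,b_k)$ to a message. For an edge $e$, let $e(m,\boldsymbol r)$ be the signal received on $e$ under message $m$ and error pattern $\boldsymbol r$, and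 let $e(m)=e(m,\boldsymbol 0)$. Write $\boldsymbol b(m)=(b_1(m),\dots,b_k(m))$. Let $\mathcal{M}^{\text{good}}$ be the set of messages $m$ such that $t$ decodes to $m$ under every admissible error pattern when $m$ is sent. Let $\mathcal{B}^{\text{good}}=\{\boldsymbol b(m):m\in\mathcal{M}^{\text{good}}\}$ and $\mathcal{B}^{\text{err}}=[2^n]^k\setminus\mathcal{B}^{\text{good}}$. *)

theory Defs
  imports Main
begin

record ('v, 'e) netw =
  edgesN :: "'e set"
  tailN  :: "'e \<Rightarrow> 'v"
  headN  :: "'e \<Rightarrow> 'v"
  capN   :: "'e \<Rightarrow> nat"
  srcN   :: "nat \<Rightarrow> 'v"
  tgtN   :: "nat \<Rightarrow> 'v"
  kN     :: nat

definition acyclic_netw :: "('v, 'e) netw \<Rightarrow> bool" where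
  "acyclic_netw N \<longleftrightarrow> finite (edgesN N) \<and>
     acyclic {(tailN N e, headN N e) | e. e \<in> edgesN N}"

datatype 'v gnode = NN 'v | Src | Snk | NA nat | NB nat

datatype 'e gedge = NE 'e | Ea nat | Ex nat | Ey nat | Ez nat | Ez' nat | Eb nat

fun gtail :: "('v, 'e) netw \<Rightarrow> 'e gedge \<Rightarrow> 'v gnode" where
  "gtail N (NE e) = NN (tailN N e)"
| "gtail N (Ea i) = Src"
| "gtail N (Ex i) = NA i"
| "gtail N (Ey i) = NA i"
| "gtail N (Ez i) = NA i"
| "gtail N (Ez' i) = NN (tgtN N i)"
| "gtail N (Eb i) = NB i"

fun ghead :: "('v, 'e) netw \<Rightarrow> 'e gedge \<Rightarrow> 'v gnode" where
  "ghead N (NE e) = NN (headN N e)"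
| "ghead N (Ea i) = NA i"
| "ghead N (Ex i) = NB i"
| "ghead N (Ey i) = NB i"
| "ghead N (Ez i) = NN (srcN N i)"
| "ghead N (Ez' i) = NB i"
| "ghead N (Eb i) = Snk"

definition gedges :: "('v, 'e) netw \<Rightarrow> 'e gedge set" where
  "gedges N = NE ` edgesN N \<union>
     (\<Union>i\<in>{1..kN N}. {Ea i, Ex i, Ey i, Ez i, Ez' i, Eb i})"

fun gcap :: "('v, 'e) netw \<Rightarrow> 'e gedge \<Rightarrow> nat" where
  "gcap N (NE e) = capN N e"
| "gcap N _ = 1"

definition in_edges :: "('v, 'e) netw \<Rightarrow> 'v gnode \<Rightarrow> 'e gedge set" where
  "in_edges N u = {e \<in> gedges N. ghead N e = u}"

(* Convention: [M] = {1..M} is represented by {0..<M}, i.e. as bit strings,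
   so that the XOR of signals is bitwise XOR on naturals. *)
definition msgs :: "('v, 'e) netw \<Rightarrow> nat \<Rightarrow> nat set" where
  "msgs N n = {0..<2 ^ (kN N * n)}"

definition is_code ::
  "('v, 'e) netw \<Rightarrow> nat \<Rightarrow> ('e gedge \<Rightarrow> nat \<Rightarrow> ('e gedge \<Rightarrow> nat) \<Rightarrow> nat)
    \<Rightarrow> (nat list \<Rightarrow> nat) \<Rightarrow> bool" where
  "is_code N n enc dec \<longleftrightarrow>
     (\<forall>e\<in>gedges N. \<forall>m \<sigma> \<sigma>'.
        (\<forall>e'\<in>in_edges N (gtail N e). \<sigma> e' = \<sigma>' e') \<longrightarrow> enc e m \<sigma> = enc e m \<sigma>') \<and>
     (\<forall>e\<in>gedges N. gtail N e \<noteq> Src \<longrightarrow> (\<forall>m m' \<sigma>. enc e m \<sigma> = enc e m' \<sigma>)) \<and>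
     (\<forall>e\<in>gedges N. \<forall>m \<sigma>. m \<in> msgs N n \<longrightarrow>
        (\<forall>e'\<in>in_edges N (gtail N e). \<sigma> e' < 2 ^ (n * gcap N e')) \<longrightarrow>
        enc e m \<sigma> < 2 ^ (n * gcap N e)) \<and>
     (\<forall>xs. length xs = kN N \<longrightarrow> (\<forall>x\<in>set xs. x < 2 ^ n) \<longrightarrow> dec xs \<in> msgs N n)"

definition admissible :: "('v, 'e) netw \<Rightarrow> nat \<Rightarrow> ('e gedge \<Rightarrow> nat) \<Rightarrow> bool" where
  "admissible N n r \<longleftrightarrow>
     (\<forall>e. r e \<noteq> 0 \<longrightarrow> e \<in> gedges N \<and> (\<forall>i. e \<noteq> Ea i \<and> e \<noteq> Eb i)
                     \<and> r e < 2 ^ (n * gcap N e)) \<and>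
     (\<forall>e e'. r e \<noteq> 0 \<longrightarrow> r e' \<noteq> 0 \<longrightarrow> e = e')"

definition sig :: "('v, 'e) netw \<Rightarrow> ('e gedge \<Rightarrow> nat \<Rightarrow> ('e gedge \<Rightarrow> nat) \<Rightarrow> nat)
    \<Rightarrow> nat \<Rightarrow> ('e gedge \<Rightarrow> nat) \<Rightarrow> 'e gedge \<Rightarrow> nat" where
  "sig N enc m r = (THE \<sigma>. (\<forall>e\<in>gedges N. \<sigma> e = Bit_Operations.xor (enc e m \<sigma>) (r e)) \<and>
                            (\<forall>e. e \<notin> gedges N \<longrightarrow> \<sigma> e = 0))"

definition bvec :: "('v, 'e) netw \<Rightarrow> ('e gedge \<Rightarrow> nat \<Rightarrow> ('e gedge \<Rightarrow> nat) \<Rightarrow> nat)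
    \<Rightarrow> nat \<Rightarrow> ('e gedge \<Rightarrow> nat) \<Rightarrow> nat list" where
  "bvec N enc m r = map (\<lambda>i. sig N enc m r (Eb i)) [1..<kN N + 1]"

definition good_msgs where
  "good_msgs N n enc dec =
     {m \<in> msgs N n. \<forall>r. admissible N n r \<longrightarrow> dec (bvec N enc m r) = m}"

definition tuples :: "('v, 'e) netw \<Rightarrow> nat \<Rightarrow> nat list set" where
  "tuples N n = {xs. length xs = kN N \<and> (\<forall>x\<in>set xs. x < 2 ^ n)}"

definition B_good where
  "B_good N n enc dec = (\<lambda>m. bvec N enc m (\<lambda>_. 0)) ` good_msgs N n enc dec"

definition B_err where
  "B_err N n enc dec = tuples N n - B_good N n enc dec"

end

theory Submission
  imports Defs
begin

text \<open>Corrupt y_i under m_1 so that it carries y_i(m_2), and x_i under m_2 so that it carries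
x_i(m_1). Since z'_i carries the same value under both messages, B_i then sees identical inputs in
the two erroneous runs and emits the same b_i. As m_1 and m_2 are good, the two received tuples
decode to m_1 and m_2; if neither lay in B_err they would be b(m_1) and b(m_2), contradicting
b_i(m_1) \<noteq> b_i(m_2).\<close>

lemma xor_less_exp:
  fixes a b :: nat
  assumes "a < 2 ^ k" and "b < 2 ^ k"
  shows "Bit_Operations.xor a b < 2 ^ k"
proof -
  have "take_bit k a = a" "take_bit k b = b"
    using assms by (simp_all add: take_bit_nat_eq_self_iff)
  then have "take_bit k (Bit_Operations.xor a b) = Bit_Operations.xor a b"
    by simp
  then show ?thesis by (metis take_bit_nat_less_exp)
qed

text \<open>Every edge of G not in N goes strictly up in this layering, so cycles of G are cycles of N.\<close>

fun layer :: "'v gnode \<Rightarrow> nat" where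
  "layer Src = 0" | "layer (NA _) = 1" | "layer (NN _) = 2" | "layer (NB _) = 3" | "layer Snk = 4"

definition edge_dep :: "('v, 'e) netw \<Rightarrow> ('e gedge \<times> 'e gedge) set" where
  "edge_dep N = {(e', e). e \<in> gedges N \<and> e' \<in> in_edges N (gtail N e)}"

lemma wf_edge_dep:
  assumes "acyclic_netw N"
  shows "wf (edge_dep N)"
proof -
  let ?NR = "{(tailN N e, headN N e) | e. e \<in> edgesN N}"
  have "wf ?NR"
    using assms unfolding acyclic_netw_def by (intro finite_acyclic_wf) auto
  then have wf_nodes: "wf (layer <*mlex*> map_prod NN NN ` ?NR)"
    by (intro wf_mlex wf_map_prod_image) (simp_all add: inj_def)
  have edge_up: "(gtail N e, ghead N e) \<in> layer <*mlex*> map_prod NN NN ` ?NR"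
    if "e \<in> gedges N" for e
    using that by (cases e) (auto simp: gedges_def mlex_iff)
  have "edge_dep N \<subseteq> inv_image (layer <*mlex*> map_prod NN NN ` ?NR) (gtail N)"
    by (auto simp: edge_dep_def in_edges_def dest!: edge_up)
  then show ?thesis
    using wf_nodes by (rule wf_subset[OF wf_inv_image, rotated])
qed

definition signal_eqns ::
  "('v, 'e) netw \<Rightarrow> ('e gedge \<Rightarrow> nat \<Rightarrow> ('e gedge \<Rightarrow> nat) \<Rightarrow> nat) \<Rightarrow> nat
    \<Rightarrow> ('e gedge \<Rightarrow> nat) \<Rightarrow> ('e gedge \<Rightarrow> nat) \<Rightarrow> bool" where
  "signal_eqns N enc m r \<sigma> \<longleftrightarrow>
     (\<forall>e\<in>gedges N. \<sigma> e = Bit_Operations.xor (enc e m \<sigma>) (r e)) \<and> (\<forall>e. e \<notin> gedges N \<longrightarrow> \<sigma> e = 0)"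

lemma enc_cong:
  assumes "is_code N n enc dec" and "e \<in> gedges N"
    and "\<And>e'. e' \<in> in_edges N (gtail N e) \<Longrightarrow> \<sigma> e' = \<sigma>' e'"
  shows "enc e m \<sigma> = enc e m \<sigma>'"
  using assms unfolding is_code_def by blast

lemma signal_eqns_unique:
  assumes "acyclic_netw N" and "is_code N n enc dec"
    and "signal_eqns N enc m r \<sigma>" and "signal_eqns N enc m r \<sigma>'"
  shows "\<sigma> = \<sigma>'"
proof
  fix e
  show "\<sigma> e = \<sigma>' e"
    using wf_edge_dep[OF assms(1)]
  proof (induction e rule: wf_induct_rule)
    case (less e)
    show ?case
    proof (cases "e \<in> gedges N")
      case True
      then have "enc e m \<sigma> = enc e m \<sigma>'"
        using less.IH by (intro enc_cong[OF assms(2)]) (auto simp: edge_dep_def)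
      then show ?thesis using assms(3,4) True by (simp add: signal_eqns_def)
    next
      case False
      then show ?thesis using assms(3,4) by (simp add: signal_eqns_def)
    qed
  qed
qed

lemma signal_eqns_solvable:
  assumes "acyclic_netw N" and "is_code N n enc dec"
  shows "\<exists>\<sigma>. signal_eqns N enc m r \<sigma>"
proof -
  define F where
    "F = (\<lambda>\<sigma> e. if e \<in> gedges N then Bit_Operations.xor (enc e m \<sigma>) (r e) else 0)"
  define \<sigma> where "\<sigma> = wfrec (edge_dep N) F"
  have unfold: "\<sigma> e = F (cut \<sigma> (edge_dep N) e) e" for e
    unfolding \<sigma>_def by (rule wfrec[OF wf_edge_dep[OF assms(1)]])
  have "enc e m (cut \<sigma> (edge_dep N) e) = enc e m \<sigma>" if "e \<in> gedges N" for e
    using that by (intro enc_cong[OF assms(2)]) (simp_all add: cut_def edge_dep_def)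
  then have "signal_eqns N enc m r \<sigma>"
    unfolding signal_eqns_def by (simp add: unfold[of _] F_def)
  then show ?thesis by blast
qed

lemma sig_eqI:
  assumes "acyclic_netw N" and "is_code N n enc dec" and "signal_eqns N enc m r \<sigma>"
  shows "sig N enc m r = \<sigma>"
proof -
  have "(THE \<sigma>. signal_eqns N enc m r \<sigma>) = \<sigma>"
    by (rule the_equality[where P = "signal_eqns N enc m r", OF assms(3)]) (rule signal_eqns_unique[OF assms(1,2) _ assms(3)])
  then show ?thesis by (simp add: sig_def signal_eqns_def)
qed

lemma signal_eqns_sig:
  assumes "acyclic_netw N" and "is_code N n enc dec"
  shows "signal_eqns N enc m r (sig N enc m r)"
  using signal_eqns_solvable[OF assms] sig_eqI[OF assms] by metis

lemma sig_less_exp: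
  assumes "acyclic_netw N" and "is_code N n enc dec"
    and "m \<in> msgs N n" and "admissible N n r" and "e \<in> gedges N"
  shows "sig N enc m r e < 2 ^ (n * gcap N e)"
  using wf_edge_dep[OF assms(1)] assms(5)
proof (induction e rule: wf_induct_rule)
  case (less e)
  let ?\<sigma> = "sig N enc m r"
  have "\<forall>e'\<in>in_edges N (gtail N e). ?\<sigma> e' < 2 ^ (n * gcap N e')"
    using less by (auto simp: edge_dep_def in_edges_def)
  then have "enc e m ?\<sigma> < 2 ^ (n * gcap N e)"
    using assms(2,3) less.prems unfolding is_code_def by blast
  moreover have "r e < 2 ^ (n * gcap N e)"
    using assms(4) unfolding admissible_def by (cases "r e = 0") auto
  ultimately show ?case
    using signal_eqns_sig[OF assms(1,2)] less.prems
    by (simp add: signal_eqns_def xor_less_exp)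
qed

lemma in_edges_gtail_not_into_NB:
  assumes "e' \<in> in_edges N (gtail N e)" and "ghead N E = NB i" and "e \<noteq> Eb i"
  shows "e' \<noteq> E" and "e' \<noteq> Eb i"
  using assms by (cases e; auto simp: in_edges_def)+

lemma signal_eqns_parallel_edge_error:
  assumes code: "is_code N n enc dec" and i: "i \<in> {1..kN N}"
    and \<sigma>: "signal_eqns N enc m (\<lambda>_. 0) \<sigma>" and E: "E = Ex i \<or> E = Ey i"
  shows "signal_eqns N enc m (\<lambda>e. if e = E then Bit_Operations.xor (\<sigma> E) v else 0)
           (\<sigma>(E := v, Eb i := enc (Eb i) m (\<sigma>(E := v))))"
    (is "signal_eqns N enc m ?r ?\<tau>")
  unfolding signal_eqns_def
proof (intro conjI ballI allI impI)
  have E_head: "ghead N E = NB i"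
    using E by auto
  fix e assume e: "e \<in> gedges N"
  show "?\<tau> e = Bit_Operations.xor (enc e m ?\<tau>) (?r e)"
  proof (cases "e = Eb i")
    case True
    have "enc e m ?\<tau> = enc e m (\<sigma>(E := v))"
      using e True by (intro enc_cong[OF code]) (auto simp: in_edges_def)
    then show ?thesis using True E by auto
  next
    case False
    have "enc e m ?\<tau> = enc e m \<sigma>"
      using e False in_edges_gtail_not_into_NB[OF _ E_head] by (intro enc_cong[OF code]) auto
    moreover have "\<sigma> e = enc e m \<sigma>" using \<sigma> e by (simp add: signal_eqns_def)
    ultimately show ?thesis using False by (auto simp: xor.assoc[symmetric])
  qed
next
  fix e assume "e \<notin> gedges N"
  moreover have "E \<in> gedges N" "Eb i \<in> gedges N"
    using i E by (auto simp: gedges_def)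
  ultimately show "?\<tau> e = 0" using \<sigma> by (auto simp: signal_eqns_def)
qed

lemma redirect_parallel_edge:
  assumes "acyclic_netw N" and "is_code N n enc dec" and "i \<in> {1..kN N}"
    and "m \<in> msgs N n" and "E = Ex i \<or> E = Ey i" and "v < 2 ^ n"
  obtains r where "admissible N n r"
    and "sig N enc m r (Eb i) = enc (Eb i) m ((sig N enc m (\<lambda>_. 0))(E := v))"
proof
  let ?\<sigma> = "sig N enc m (\<lambda>_. 0)"
  let ?r = "\<lambda>e. if e = E then Bit_Operations.xor (?\<sigma> E) v else 0"
  have "E \<in> gedges N"
    using assms(3,5) by (auto simp: gedges_def)
  then have "?\<sigma> E < 2 ^ n"
    using sig_less_exp[OF assms(1,2,4)] assms(5) by (force simp: admissible_def)
  then show "admissible N n ?r"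
    using \<open>E \<in> gedges N\<close> assms(5,6) by (auto simp: admissible_def xor_less_exp)
  show "sig N enc m ?r (Eb i) = enc (Eb i) m (?\<sigma>(E := v))"
    using sig_eqI[OF assms(1,2) signal_eqns_parallel_edge_error[OF assms(2,3)
          signal_eqns_sig[OF assms(1,2)] assms(5)]] by simp
qed

lemma enc_Eb_cong:
  assumes code: "is_code N n enc dec" and i: "i \<in> {1..kN N}"
    and "\<tau> (Ex i) = \<tau>' (Ex i)" and "\<tau> (Ey i) = \<tau>' (Ey i)" and "\<tau> (Ez' i) = \<tau>' (Ez' i)"
  shows "enc (Eb i) m \<tau> = enc (Eb i) m' \<tau>'"
proof -
  have Eb: "Eb i \<in> gedges N"
    using i by (auto simp: gedges_def)
  then have "enc (Eb i) m \<tau> = enc (Eb i) m' \<tau>"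
    using code unfolding is_code_def by simp
  also have "\<dots> = enc (Eb i) m' \<tau>'"
  proof (rule enc_cong[OF code Eb])
    fix e' assume "e' \<in> in_edges N (gtail N (Eb i))"
    then have "e' = Ex i \<or> e' = Ey i \<or> e' = Ez' i"
      by (cases e') (auto simp: in_edges_def)
    then show "\<tau> e' = \<tau>' e'" using assms(3-5) by auto
  qed
  finally show ?thesis .
qed

lemma bvec_nth:
  assumes "i \<in> {1..kN N}"
  shows "bvec N enc m r ! (i - 1) = sig N enc m r (Eb i)"
  using assms by (auto simp: bvec_def nth_upt simp del: upt_Suc)

lemma bvec_in_tuples:
  assumes "acyclic_netw N" and "is_code N n enc dec"
    and "m \<in> msgs N n" and "admissible N n r"
  shows "bvec N enc m r \<in> tuples N n"
proof -
  have "sig N enc m r (Eb j) < 2 ^ n" if "j \<in> {1..kN N}" for j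
    using sig_less_exp[OF assms, of "Eb j"] that by (auto simp: gedges_def)
  then show ?thesis by (auto simp: bvec_def tuples_def)
qed

lemma bvec_eq_if_not_decoded_from_B_err:
  assumes "acyclic_netw N" and "is_code N n enc dec"
    and m: "m \<in> good_msgs N n enc dec" and r: "admissible N n r"
    and "\<forall>\<beta>\<in>B_err N n enc dec. dec \<beta> \<noteq> m"
  shows "bvec N enc m r = bvec N enc m (\<lambda>_. 0)"
proof -
  have "dec (bvec N enc m r) = m"
    using m r by (simp add: good_msgs_def)
  moreover have "bvec N enc m r \<in> tuples N n"
    using m r by (intro bvec_in_tuples[OF assms(1,2)]) (simp_all add: good_msgs_def)
  ultimately have "bvec N enc m r \<in> B_good N n enc dec"
    using assms(5) by (auto simp: B_err_def)
  then obtain m' where m': "m' \<in> good_msgs N n enc dec"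
    and eq: "bvec N enc m r = bvec N enc m' (\<lambda>_. 0)"
    by (auto simp: B_good_def)
  have "admissible N n (\<lambda>_. 0)"
    by (simp add: admissible_def)
  then have "m' = m"
    using m' eq \<open>dec (bvec N enc m r) = m\<close> by (simp add: good_msgs_def)
  then show ?thesis using eq by simp
qed

theorem lemma2:
  fixes N :: "('v, 'e) netw" and n :: nat
    and enc :: "'e gedge \<Rightarrow> nat \<Rightarrow> ('e gedge \<Rightarrow> nat) \<Rightarrow> nat"
    and dec :: "nat list \<Rightarrow> nat"
    and i zhat m1 m2 :: nat
  assumes "acyclic_netw N"
    and "is_code N n enc dec"
    and "i \<in> {1..kN N}"
    and "zhat < 2 ^ n"
    and "m1 \<in> good_msgs N n enc dec" and "m2 \<in> good_msgs N n enc dec"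
    and "sig N enc m1 (\<lambda>_. 0) (Ez' i) = zhat"
    and "sig N enc m2 (\<lambda>_. 0) (Ez' i) = zhat"
    and "sig N enc m1 (\<lambda>_. 0) (Eb i) \<noteq> sig N enc m2 (\<lambda>_. 0) (Eb i)"
  shows "\<exists>\<beta>\<in>B_err N n enc dec. dec \<beta> = m1 \<or> dec \<beta> = m2"
proof (rule ccontr)
  assume no_err: "\<not> ?thesis"
  note ac = assms(1) and code = assms(2) and i = assms(3)
  define \<sigma>1 where "\<sigma>1 = sig N enc m1 (\<lambda>_. 0)"
  define \<sigma>2 where "\<sigma>2 = sig N enc m2 (\<lambda>_. 0)"
  have msgs: "m1 \<in> msgs N n" "m2 \<in> msgs N n"
    using assms(5,6) by (simp_all add: good_msgs_def)
  have "Ex i \<in> gedges N" "Ey i \<in> gedges N"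
    using i by (auto simp: gedges_def)
  then have "\<sigma>1 (Ex i) < 2 ^ n" "\<sigma>2 (Ey i) < 2 ^ n"
    unfolding \<sigma>1_def \<sigma>2_def
    using sig_less_exp[OF ac code msgs(1)] sig_less_exp[OF ac code msgs(2)]
    by (force simp: admissible_def)+
  obtain r1 where r1: "admissible N n r1"
    and b1: "sig N enc m1 r1 (Eb i) = enc (Eb i) m1 (\<sigma>1(Ey i := \<sigma>2 (Ey i)))"
    using redirect_parallel_edge[OF ac code i msgs(1)] \<open>\<sigma>2 (Ey i) < 2 ^ n\<close> \<sigma>1_def by blast
  obtain r2 where r2: "admissible N n r2"
    and b2: "sig N enc m2 r2 (Eb i) = enc (Eb i) m2 (\<sigma>2(Ex i := \<sigma>1 (Ex i)))"
    using redirect_parallel_edge[OF ac code i msgs(2)] \<open>\<sigma>1 (Ex i) < 2 ^ n\<close> \<sigma>2_def by blast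
  have "sig N enc m1 r1 (Eb i) = sig N enc m2 r2 (Eb i)"
    unfolding b1 b2 using assms(7,8) by (intro enc_Eb_cong[OF code i]) (simp_all add: \<sigma>1_def \<sigma>2_def)
  moreover have "bvec N enc m1 r1 = bvec N enc m1 (\<lambda>_. 0)" "bvec N enc m2 r2 = bvec N enc m2 (\<lambda>_. 0)"
    using no_err by (auto intro!: bvec_eq_if_not_decoded_from_B_err[OF ac code] assms(5,6) r1 r2)
  ultimately show False
    using assms(9) bvec_nth[OF i] by metis
qed

end
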